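(* Consider on the $\mathbb{Z}^2$ graph the system ($m\mathcal{H}1$) $$u_2=v+t\frac{p-q}{s-t},\qquad v_1=u+s\frac{p-q}{s-t},\qquad s_2=\frac{1}{t}+\frac{p-q}{t(u-v)},\qquad t_1=\frac{1}{s}+\frac{p-q}{s(u-v)}.$$ This bond system corresponds to the vertex system ($d$-$H2$) $$2(z_{12}-z)(x_2-x_1)+(p-q)(x_1+x_2)=0,\qquad 2(x_{12}-x)(z_2-z_1)+(p-q)(x_{12}+x)=0,$$ in the sense that, writing $s=x_1/x$, $t=x_2/x$, $u=z_1+z-\frac{p}{2}$, $v=z_2+z-\frac{q}{2}$ with potential functions $x,z$ on the vertices, the system $m\mathcal{H}1$ becomes exactly $d$-$H2$; moreover the vertex system $d$-$H2$ is 3D-compatible.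
   Context: $u,s$ are functions on horizontal edges $\{(m,n),(m+1,n)\}$ and $v,t$ on vertical edges $\{(m,n),(m,n+1)\}$ of the $\mathbb{Z}^2$ graph; for a square with lower-left vertex $(m,n)$, $u,s$ sit on the bottom edge, $v,t$ on the left edge, $u_2,s_2$ on the top edge, $v_1,t_1$ on the right edge; $p$ depends only on $m$, $q$ only on $n$. For vertex functions, $x=x_{m,n}$, $x_1=x_{m+1,n}$, $x_2=x_{m,n+1}$, $x_{12}=x_{m+1,n+1}$, and similarly for $z$. A two-component vertex system on $\mathbb{Z}^2$ is 3D-compatible if, when it is imposed on every face of a cube in $\mathbb{Z}^3$ (with lattice parameters $p_1,p_2,p_3$ attached to the three directions), the values $(x_{123},z_{123})$ at the vertex opposite to the origin computed in the three possible ways coincide. *)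

theory Defs
  imports Main
begin

text \<open>The bond system mH1 on one square: u, s on the bottom edge, v, t on the left edge,
  u2, s2 on the top edge, v1, t1 on the right edge; p, q the lattice parameters.\<close>
definition mH1 :: "'a::field \<Rightarrow> 'a \<Rightarrow> 'a \<Rightarrow> 'a \<Rightarrow> 'a \<Rightarrow> 'a \<Rightarrow> 'a \<Rightarrow> 'a \<Rightarrow> 'a \<Rightarrow> 'a \<Rightarrow> bool" where
  "mH1 p q u v s t u2 v1 s2 t1 \<longleftrightarrow>
     u2 = v + t * (p - q) / (s - t) \<and>
     v1 = u + s * (p - q) / (s - t) \<and>
     s2 = 1 / t + (p - q) / (t * (u - v)) \<and>
     t1 = 1 / s + (p - q) / (s * (u - v))"

definition dH2 :: "'a::field \<Rightarrow> 'a \<Rightarrow> 'a \<Rightarrow> 'a \<Rightarrow> 'a \<Rightarrow> 'a \<Rightarrow> 'a \<Rightarrow> 'a \<Rightarrow> 'a \<Rightarrow> 'a \<Rightarrow> bool" where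
  "dH2 p q x x1 x2 x12 z z1 z2 z12 \<longleftrightarrow>
     2 * (z12 - z) * (x2 - x1) + (p - q) * (x1 + x2) = 0 \<and>
     2 * (x12 - x) * (z2 - z1) + (p - q) * (x12 + x) = 0"

text \<open>A two-component vertex system Q p q x x1 x2 x12 z z1 z2 z12.
  (X, Z) is the value at the fourth vertex computed from the face, i.e. the unique solution.\<close>
definition face_sol :: "('a \<Rightarrow> 'a \<Rightarrow> 'a \<Rightarrow> 'a \<Rightarrow> 'a \<Rightarrow> 'a \<Rightarrow> 'a \<Rightarrow> 'a \<Rightarrow> 'a \<Rightarrow> 'a \<Rightarrow> bool)
    \<Rightarrow> 'a \<Rightarrow> 'a \<Rightarrow> 'a \<Rightarrow> 'a \<Rightarrow> 'a \<Rightarrow> 'a \<Rightarrow> 'a \<Rightarrow> 'a \<Rightarrow> 'a \<Rightarrow> 'a \<Rightarrow> bool" where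
  "face_sol Q p q x x1 x2 z z1 z2 X Z \<longleftrightarrow>
     Q p q x x1 x2 X z z1 z2 Z \<and>
     (\<forall>X' Z'. Q p q x x1 x2 X' z z1 z2 Z' \<longrightarrow> X' = X \<and> Z' = Z)"

text \<open>3D-compatibility: impose Q on every face of a cube (parameters p1 p2 p3 for the three
  directions); whenever all face computations are well defined, the three values of
  (x123, z123) coincide.\<close>
definition three_d_compatible ::
    "('a \<Rightarrow> 'a \<Rightarrow> 'a \<Rightarrow> 'a \<Rightarrow> 'a \<Rightarrow> 'a \<Rightarrow> 'a \<Rightarrow> 'a \<Rightarrow> 'a \<Rightarrow> 'a \<Rightarrow> bool) \<Rightarrow> bool" where
  "three_d_compatible Q \<longleftrightarrow>
     (\<forall>p1 p2 p3 x x1 x2 x3 z z1 z2 z3 x12 x13 x23 z12 z13 z23 a1 b1 a2 b2 a3 b3.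
        face_sol Q p1 p2 x x1 x2 z z1 z2 x12 z12 \<and>
        face_sol Q p1 p3 x x1 x3 z z1 z3 x13 z13 \<and>
        face_sol Q p2 p3 x x2 x3 z z2 z3 x23 z23 \<and>
        face_sol Q p1 p2 x3 x13 x23 z3 z13 z23 a1 b1 \<and>
        face_sol Q p1 p3 x2 x12 x23 z2 z12 z23 a2 b2 \<and>
        face_sol Q p2 p3 x1 x12 x13 z1 z12 z13 a3 b3
        \<longrightarrow> a1 = a2 \<and> a2 = a3 \<and> b1 = b2 \<and> b2 = b3)"

end

theory Submission
  imports Defs
begin

text \<open>Under the potential substitution each equation of mH1, once its denominators are cleared,
  becomes one of the two equations of d-H2: the equations for u2 and v1 give the first, those for
  s2 and t1 the second.

  On a face, d-H2 determines z12 from x1, x2 and x12 from z1, z2. Eliminating the faces through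
  the origin, each of the three values of x123 becomes the ratio of the 3x3 determinants with rows
  (1, x_i, p_i x_i) and (1, x_i, p_i), and each value of z123 a ratio of alternating functions of
  the pairs (z_i, p_i). These ratios are invariant under permutations of the three directions, so
  the three values coincide.\<close>

lemma eq_iff_scaled_diff_eq_0:
  fixes c :: "'a::field"
  assumes "c \<noteq> 0" and "c * (L - R) = E"
  shows "L = R \<longleftrightarrow> E = 0"
  using assms by auto

lemma mH1_iff_dH2:
  fixes x :: "'a::field_char_0"
  assumes nz: "x \<noteq> 0" "x1 \<noteq> 0" "x2 \<noteq> 0" "x1 \<noteq> x2" "u \<noteq> v"
    and s: "s = x1 / x" and t: "t = x2 / x"
    and u: "u = z1 + z - p / 2" and v: "v = z2 + z - q / 2"
    and u2: "u2 = z12 + z2 - p / 2" and v1: "v1 = z12 + z1 - q / 2"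
    and s2: "s2 = x12 / x2" and t1: "t1 = x12 / x1"
  shows "mH1 p q u v s t u2 v1 s2 t1 \<longleftrightarrow> dH2 p q x x1 x2 x12 z z1 z2 z12"
proof -
  have "u2 = v + t * (p - q) / (s - t) \<longleftrightarrow> 2 * (z12 - z) * (x2 - x1) + (p - q) * (x1 + x2) = 0"
    using nz by (intro eq_iff_scaled_diff_eq_0[where c = "2 * (x2 - x1)"])
      (simp_all add: s t v u2 field_simps)
  moreover have "v1 = u + s * (p - q) / (s - t) \<longleftrightarrow> 2 * (z12 - z) * (x2 - x1) + (p - q) * (x1 + x2) = 0"
    using nz by (intro eq_iff_scaled_diff_eq_0[where c = "2 * (x2 - x1)"])
      (simp_all add: s t u v1 field_simps)
  moreover have "s2 = 1 / t + (p - q) / (t * (u - v)) \<longleftrightarrow> (x12 - x) * (u - v) - (p - q) * x = 0"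
    using nz by (intro eq_iff_scaled_diff_eq_0[where c = "x2 * (u - v)"])
      (simp_all add: s2 t field_simps)
  moreover have "t1 = 1 / s + (p - q) / (s * (u - v)) \<longleftrightarrow> (x12 - x) * (u - v) - (p - q) * x = 0"
    using nz by (intro eq_iff_scaled_diff_eq_0[where c = "x1 * (u - v)"])
      (simp_all add: t1 s field_simps)
  moreover have "(x12 - x) * (u - v) - (p - q) * x = 0 \<longleftrightarrow>
      2 * (x12 - x) * (z2 - z1) + (p - q) * (x12 + x) = 0"
    by (intro eq_iff_scaled_diff_eq_0[where c = "-2"]) (simp_all add: u v field_simps)
  ultimately show ?thesis
    unfolding mH1_def dH2_def by blast
qed

text \<open>The determinant of the 3x3 matrix with rows (1, a_i, b_i).\<close>
definition tri_det :: "'a::comm_ring \<Rightarrow> 'a \<Rightarrow> 'a \<Rightarrow> 'a \<Rightarrow> 'a \<Rightarrow> 'a \<Rightarrow> 'a" where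
  "tri_det a1 a2 a3 b1 b2 b3 = (a1 - a3) * (b2 - b3) - (a2 - a3) * (b1 - b3)"

lemma tri_det_swap23: "tri_det a1 a3 a2 b1 b3 b2 = - tri_det a1 a2 a3 b1 b2 b3"
  by (simp add: tri_det_def algebra_simps)

lemma tri_det_rotate: "tri_det a2 a3 a1 b2 b3 b1 = tri_det a1 a2 a3 b1 b2 b3"
  by (simp add: tri_det_def algebra_simps)

definition dH2_x123 :: "'a::field \<Rightarrow> 'a \<Rightarrow> 'a \<Rightarrow> 'a \<Rightarrow> 'a \<Rightarrow> 'a \<Rightarrow> 'a" where
  "dH2_x123 p1 p2 p3 x1 x2 x3 =
     tri_det x1 x2 x3 (p1 * x1) (p2 * x2) (p3 * x3) / tri_det x1 x2 x3 p1 p2 p3"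

definition dH2_z123 :: "'a::field \<Rightarrow> 'a \<Rightarrow> 'a \<Rightarrow> 'a \<Rightarrow> 'a \<Rightarrow> 'a \<Rightarrow> 'a" where
  "dH2_z123 p1 p2 p3 z1 z2 z3 =
     (4 * tri_det z1 z2 z3 (p1 * z1) (p2 * z2) (p3 * z3) - tri_det p1 p2 p3 (p1\<^sup>2) (p2\<^sup>2) (p3\<^sup>2))
       / (4 * tri_det z1 z2 z3 p1 p2 p3)"

lemma dH2_x123_swap23: "dH2_x123 p1 p3 p2 x1 x3 x2 = dH2_x123 p1 p2 p3 x1 x2 x3"
proof -
  have "tri_det x1 x3 x2 (p1 * x1) (p3 * x3) (p2 * x2) = - tri_det x1 x2 x3 (p1 * x1) (p2 * x2) (p3 * x3)"
    and "tri_det x1 x3 x2 p1 p3 p2 = - tri_det x1 x2 x3 p1 p2 p3"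
    by (rule tri_det_swap23)+
  then show ?thesis
    by (simp add: dH2_x123_def)
qed

lemma dH2_x123_rotate: "dH2_x123 p2 p3 p1 x2 x3 x1 = dH2_x123 p1 p2 p3 x1 x2 x3"
proof -
  have "tri_det x2 x3 x1 (p2 * x2) (p3 * x3) (p1 * x1) = tri_det x1 x2 x3 (p1 * x1) (p2 * x2) (p3 * x3)"
    and "tri_det x2 x3 x1 p2 p3 p1 = tri_det x1 x2 x3 p1 p2 p3"
    by (rule tri_det_rotate)+
  then show ?thesis
    by (simp add: dH2_x123_def)
qed

lemma dH2_z123_swap23: "dH2_z123 p1 p3 p2 z1 z3 z2 = dH2_z123 p1 p2 p3 z1 z2 z3"
proof -
  have "tri_det z1 z3 z2 (p1 * z1) (p3 * z3) (p2 * z2) = - tri_det z1 z2 z3 (p1 * z1) (p2 * z2) (p3 * z3)"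
    and "tri_det p1 p3 p2 (p1\<^sup>2) (p3\<^sup>2) (p2\<^sup>2) = - tri_det p1 p2 p3 (p1\<^sup>2) (p2\<^sup>2) (p3\<^sup>2)"
    and "tri_det z1 z3 z2 p1 p3 p2 = - tri_det z1 z2 z3 p1 p2 p3"
    by (rule tri_det_swap23)+
  moreover have "4 * - a - - b = - (4 * a - b)" and "4 * - c = - (4 * c)" for a b c :: 'a
    by simp_all
  ultimately show ?thesis
    unfolding dH2_z123_def by (simp only: minus_divide_divide)
qed

lemma dH2_z123_rotate: "dH2_z123 p2 p3 p1 z2 z3 z1 = dH2_z123 p1 p2 p3 z1 z2 z3"
proof -
  have "tri_det z2 z3 z1 (p2 * z2) (p3 * z3) (p1 * z1) = tri_det z1 z2 z3 (p1 * z1) (p2 * z2) (p3 * z3)"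
    and "tri_det p2 p3 p1 (p2\<^sup>2) (p3\<^sup>2) (p1\<^sup>2) = tri_det p1 p2 p3 (p1\<^sup>2) (p2\<^sup>2) (p3\<^sup>2)"
    and "tri_det z2 z3 z1 p2 p3 p1 = tri_det z1 z2 z3 p1 p2 p3"
    by (rule tri_det_rotate)+
  then show ?thesis
    by (simp add: dH2_z123_def)
qed

lemma dH2_top_x_eq:
  fixes a :: "'a::field_char_0"
  assumes "xi \<noteq> xk" "xj \<noteq> xk" and W_nz: "2 * (zjk - zik) + (pi - pj) \<noteq> 0"
    and ik: "2 * (zik - z) * (xk - xi) + (pi - pk) * (xi + xk) = 0"
    and jk: "2 * (zjk - z) * (xk - xj) + (pj - pk) * (xj + xk) = 0"
    and top: "2 * (a - xk) * (zjk - zik) + (pi - pj) * (a + xk) = 0"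
  shows "a = dH2_x123 pi pj pk xi xj xk"
proof -
  define W where "W = 2 * (zjk - zik) + (pi - pj)"
  define P where "P = (xi - xk) * (xj - xk)"
  define D where "D = tri_det xi xj xk pi pj pk"
  define N where "N = tri_det xi xj xk (pi * xi) (pj * xj) (pk * xk)"
  have ik': "2 * (zik - z) * (xk - xi) = - ((pi - pk) * (xi + xk))"
    and jk': "2 * (zjk - z) * (xk - xj) = - ((pj - pk) * (xj + xk))"
    using ik jk by (simp_all only: eq_neg_iff_add_eq_0)
  have "W * P = (2 * (zjk - z) * (xk - xj)) * (xk - xi) - (2 * (zik - z) * (xk - xi)) * (xk - xj)
      + (pi - pj) * P"
    unfolding W_def P_def by (simp add: algebra_simps)
  also have "\<dots> = 2 * xk * D"
    unfolding ik' jk'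
    by (simp add: P_def D_def tri_det_def algebra_simps)
  finally have WP: "W * P = 2 * xk * D" .
  have aW: "a * W = xk * (W - 2 * (pi - pj))"
    using top unfolding W_def by (simp add: algebra_simps)
  have ND: "N = xk * D - (pi - pj) * P"
    by (simp add: N_def D_def P_def tri_det_def algebra_simps)
  have "2 * (xk * (a * D - N)) = a * (W * P) - xk * (W * P) + 2 * xk * (pi - pj) * P"
    unfolding WP ND by (simp add: algebra_simps)
  also have "\<dots> = (a * W - xk * (W - 2 * (pi - pj))) * P"
    by (simp add: algebra_simps)
  finally have "xk * (a * D - N) = 0"
    using aW by simp
  moreover have "W * P \<noteq> 0"
    using W_nz assms(1,2) unfolding W_def P_def by simp
  then have "xk * D \<noteq> 0"
    unfolding WP by simp
  ultimately show ?thesis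
    unfolding dH2_x123_def D_def[symmetric] N_def[symmetric] by (simp add: eq_divide_eq)
qed

lemma dH2_top_z_eq:
  fixes b :: "'a::field_char_0"
  assumes Bi_nz: "2 * (zk - zi) + (pi - pk) \<noteq> 0" and Bj_nz: "2 * (zk - zj) + (pj - pk) \<noteq> 0"
    and "xik \<noteq> xjk"
    and ik: "2 * (xik - x) * (zk - zi) + (pi - pk) * (xik + x) = 0"
    and jk: "2 * (xjk - x) * (zk - zj) + (pj - pk) * (xjk + x) = 0"
    and top: "2 * (b - zk) * (xjk - xik) + (pi - pj) * (xik + xjk) = 0"
  shows "b = dH2_z123 pi pj pk zi zj zk"
proof -
  define Ai where "Ai = 2 * (zk - zi) - (pi - pk)"
  define Bi where "Bi = 2 * (zk - zi) + (pi - pk)"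
  define Aj where "Aj = 2 * (zk - zj) - (pj - pk)"
  define Bj where "Bj = 2 * (zk - zj) + (pj - pk)"
  define D where "D = 4 * tri_det zi zj zk pi pj pk"
  define N where "N = 4 * tri_det zi zj zk (pi * zi) (pj * zj) (pk * zk)
    - tri_det pi pj pk (pi\<^sup>2) (pj\<^sup>2) (pk\<^sup>2)"
  have det: "Aj * Bi - Ai * Bj = D"
    by (simp add: Ai_def Bi_def Aj_def Bj_def D_def tri_det_def algebra_simps)
  have num: "2 * N = 2 * zk * D - (pi - pj) * (Ai * Bj + Aj * Bi)"
    by (simp add: Ai_def Bi_def Aj_def Bj_def D_def N_def tri_det_def power2_eq_square
        algebra_simps)
  have xik: "xik * Bi = x * Ai"
    using ik unfolding Ai_def Bi_def by (simp add: algebra_simps)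
  have xjk: "xjk * Bj = x * Aj"
    using jk unfolding Aj_def Bj_def by (simp add: algebra_simps)
  have diff: "(xjk - xik) * (Bi * Bj) = x * D"
  proof -
    have "(xjk - xik) * (Bi * Bj) = (xjk * Bj) * Bi - (xik * Bi) * Bj"
      by (simp add: algebra_simps)
    also have "\<dots> = x * (Aj * Bi - Ai * Bj)"
      unfolding xik xjk by (simp add: algebra_simps)
    finally show ?thesis
      unfolding det .
  qed
  have sum: "(xik + xjk) * (Bi * Bj) = x * (Ai * Bj + Aj * Bi)"
  proof -
    have "(xik + xjk) * (Bi * Bj) = (xik * Bi) * Bj + (xjk * Bj) * Bi"
      by (simp add: algebra_simps)
    then show ?thesis
      unfolding xik xjk by (simp add: algebra_simps)
  qed
  have "2 * x * (b * D - N) = 2 * b * (x * D) - x * (2 * N)"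
    by (simp add: algebra_simps)
  also have "\<dots> = 2 * (b - zk) * (x * D) + (pi - pj) * (x * (Ai * Bj + Aj * Bi))"
    unfolding num by (simp add: algebra_simps)
  also have "\<dots> = (2 * (b - zk) * (xjk - xik) + (pi - pj) * (xik + xjk)) * (Bi * Bj)"
    unfolding diff[symmetric] sum[symmetric] by (simp add: algebra_simps)
  also have "\<dots> = 0"
    unfolding top by simp
  finally have "x * (b * D - N) = 0"
    by simp
  moreover have "(xjk - xik) * (Bi * Bj) \<noteq> 0"
    using Bi_nz Bj_nz \<open>xik \<noteq> xjk\<close> unfolding Bi_def Bj_def by simp
  then have "x * D \<noteq> 0"
    unfolding diff .
  ultimately show ?thesis
    unfolding dH2_z123_def D_def[symmetric] N_def[symmetric] by (simp add: eq_divide_eq)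
qed

lemma dH2_swap: "dH2 q p x x2 x1 X z z2 z1 Z \<longleftrightarrow> dH2 p q x x1 x2 X z z1 z2 Z"
proof -
  have "2 * (Z - z) * (x1 - x2) + (q - p) * (x2 + x1)
      = - (2 * (Z - z) * (x2 - x1) + (p - q) * (x1 + x2))"
    and "2 * (X - x) * (z1 - z2) + (q - p) * (X + x)
      = - (2 * (X - x) * (z2 - z1) + (p - q) * (X + x))"
    by (simp_all add: algebra_simps)
  then show ?thesis
    unfolding dH2_def by (simp only: neg_equal_0_iff_equal)
qed

lemma face_sol_dH2_swap:
  "face_sol dH2 q p x x2 x1 z z2 z1 X Z \<longleftrightarrow> face_sol dH2 p q x x1 x2 z z1 z2 X Z"
proof -
  have "dH2 q p x x2 x1 X' z z2 z1 Z' \<longleftrightarrow> dH2 p q x x1 x2 X' z z1 z2 Z'" for X' Z'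
    by (rule dH2_swap)
  then show ?thesis
    unfolding face_sol_def by simp
qed

lemma face_sol_dH2D:
  fixes x :: "'a::field_char_0"
  assumes "face_sol dH2 p q x x1 x2 z z1 z2 X Z"
  shows "x1 \<noteq> x2" and "2 * (z2 - z1) + (p - q) \<noteq> 0"
    and "2 * (Z - z) * (x2 - x1) + (p - q) * (x1 + x2) = 0"
    and "2 * (X - x) * (z2 - z1) + (p - q) * (X + x) = 0"
proof -
  have sol: "dH2 p q x x1 x2 X z z1 z2 Z"
    and unique: "\<And>X' Z'. dH2 p q x x1 x2 X' z z1 z2 Z' \<Longrightarrow> X' = X \<and> Z' = Z"
    using assms unfolding face_sol_def by blast+
  \<comment> \<open>In the degenerate cases excluded below, Z resp. X is not determined by the face.\<close>
  from sol show eqZ: "2 * (Z - z) * (x2 - x1) + (p - q) * (x1 + x2) = 0"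
    and eqX: "2 * (X - x) * (z2 - z1) + (p - q) * (X + x) = 0"
    unfolding dH2_def by auto
  show "x1 \<noteq> x2"
  proof
    assume "x1 = x2"
    then have "dH2 p q x x1 x2 X z z1 z2 (Z + 1)"
      using eqZ eqX unfolding dH2_def by simp
    from unique[OF this] show False
      by simp
  qed
  show "2 * (z2 - z1) + (p - q) \<noteq> 0"
  proof
    assume "2 * (z2 - z1) + (p - q) = 0"
    then have "2 * (X + 1 - x) * (z2 - z1) + (p - q) * (X + 1 + x) = 0"
      using eqX by (simp add: algebra_simps)
    then have "dH2 p q x x1 x2 (X + 1) z z1 z2 Z"
      using eqZ unfolding dH2_def by simp
    from unique[OF this] show False
      by simp
  qed
qed

lemma face_sol_dH2_x123:
  fixes x :: "'a::field_char_0"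
  assumes ik: "face_sol dH2 pi pk x xi xk z zi zk xik zik"
    and jk: "face_sol dH2 pj pk x xj xk z zj zk xjk zjk"
    and top: "face_sol dH2 pi pj xk xik xjk zk zik zjk a b"
  shows "a = dH2_x123 pi pj pk xi xj xk"
  using face_sol_dH2D(1)[OF ik] face_sol_dH2D(1)[OF jk] face_sol_dH2D(2)[OF top]
    face_sol_dH2D(3)[OF ik] face_sol_dH2D(3)[OF jk] face_sol_dH2D(4)[OF top]
  by (rule dH2_top_x_eq)

lemma face_sol_dH2_z123:
  fixes x :: "'a::field_char_0"
  assumes ik: "face_sol dH2 pi pk x xi xk z zi zk xik zik"
    and jk: "face_sol dH2 pj pk x xj xk z zj zk xjk zjk"
    and top: "face_sol dH2 pi pj xk xik xjk zk zik zjk a b"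
  shows "b = dH2_z123 pi pj pk zi zj zk"
  using face_sol_dH2D(2)[OF ik] face_sol_dH2D(2)[OF jk] face_sol_dH2D(1)[OF top]
    face_sol_dH2D(4)[OF ik] face_sol_dH2D(4)[OF jk] face_sol_dH2D(3)[OF top]
  by (rule dH2_top_z_eq)

lemma three_d_compatible_dH2: "three_d_compatible (dH2 :: 'a::field_char_0 \<Rightarrow> _)"
  unfolding three_d_compatible_def
proof (intro allI impI, elim conjE)
  fix p1 p2 p3 x x1 x2 x3 z z1 z2 z3 x12 x13 x23 z12 z13 z23 a1 b1 a2 b2 a3 b3 :: 'a
  assume F12: "face_sol dH2 p1 p2 x x1 x2 z z1 z2 x12 z12"
    and F13: "face_sol dH2 p1 p3 x x1 x3 z z1 z3 x13 z13"
    and F23: "face_sol dH2 p2 p3 x x2 x3 z z2 z3 x23 z23"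
    and T3: "face_sol dH2 p1 p2 x3 x13 x23 z3 z13 z23 a1 b1"
    and T2: "face_sol dH2 p1 p3 x2 x12 x23 z2 z12 z23 a2 b2"
    and T1: "face_sol dH2 p2 p3 x1 x12 x13 z1 z12 z13 a3 b3"
  have F21: "face_sol dH2 p2 p1 x x2 x1 z z2 z1 x12 z12"
    using F12 by (rule face_sol_dH2_swap[THEN iffD2])
  have F31: "face_sol dH2 p3 p1 x x3 x1 z z3 z1 x13 z13"
    using F13 by (rule face_sol_dH2_swap[THEN iffD2])
  have F32: "face_sol dH2 p3 p2 x x3 x2 z z3 z2 x23 z23"
    using F23 by (rule face_sol_dH2_swap[THEN iffD2])
  have "a1 = dH2_x123 p1 p2 p3 x1 x2 x3" "b1 = dH2_z123 p1 p2 p3 z1 z2 z3"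
    using face_sol_dH2_x123[OF F13 F23 T3] face_sol_dH2_z123[OF F13 F23 T3] by simp_all
  moreover have "a2 = dH2_x123 p1 p2 p3 x1 x2 x3" "b2 = dH2_z123 p1 p2 p3 z1 z2 z3"
    using face_sol_dH2_x123[OF F12 F32 T2] face_sol_dH2_z123[OF F12 F32 T2]
    by (simp_all add: dH2_x123_swap23 dH2_z123_swap23)
  moreover have "a3 = dH2_x123 p1 p2 p3 x1 x2 x3" "b3 = dH2_z123 p1 p2 p3 z1 z2 z3"
    using face_sol_dH2_x123[OF F21 F31 T1] face_sol_dH2_z123[OF F21 F31 T1]
    by (simp_all add: dH2_x123_rotate dH2_z123_rotate)
  ultimately show "a1 = a2 \<and> a2 = a3 \<and> b1 = b2 \<and> b2 = b3"
    by simp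
qed

theorem proposition3p3:
  fixes x z :: "int \<Rightarrow> int \<Rightarrow> 'a::field_char_0"
    and p q :: "int \<Rightarrow> 'a"
  defines "s \<equiv> \<lambda>m n. x (m + 1) n / x m n"
      and "t \<equiv> \<lambda>m n. x m (n + 1) / x m n"
      and "u \<equiv> \<lambda>m n. z (m + 1) n + z m n - p m / 2"
      and "v \<equiv> \<lambda>m n. z m (n + 1) + z m n - q n / 2"
  shows "(\<forall>m n. x m n \<noteq> 0 \<and> s m n \<noteq> 0 \<and> t m n \<noteq> 0 \<and> s m n \<noteq> t m n \<and> u m n \<noteq> v m n \<longrightarrow>
            (mH1 (p m) (q n) (u m n) (v m n) (s m n) (t m n)
                 (u m (n + 1)) (v (m + 1) n) (s m (n + 1)) (t (m + 1) n)
             \<longleftrightarrow> dH2 (p m) (q n) (x m n) (x (m + 1) n) (x m (n + 1)) (x (m + 1) (n + 1))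
                    (z m n) (z (m + 1) n) (z m (n + 1)) (z (m + 1) (n + 1))))
         \<and> three_d_compatible (dH2 :: 'a \<Rightarrow> _)"
proof (intro conjI allI impI)
  fix m n
  assume "x m n \<noteq> 0 \<and> s m n \<noteq> 0 \<and> t m n \<noteq> 0 \<and> s m n \<noteq> t m n \<and> u m n \<noteq> v m n"
  then have "x m n \<noteq> 0" "x (m + 1) n \<noteq> 0" "x m (n + 1) \<noteq> 0" "x (m + 1) n \<noteq> x m (n + 1)"
    "u m n \<noteq> v m n"
    by (simp_all add: s_def t_def)
  then show "mH1 (p m) (q n) (u m n) (v m n) (s m n) (t m n)
                 (u m (n + 1)) (v (m + 1) n) (s m (n + 1)) (t (m + 1) n)
             \<longleftrightarrow> dH2 (p m) (q n) (x m n) (x (m + 1) n) (x m (n + 1)) (x (m + 1) (n + 1))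
                    (z m n) (z (m + 1) n) (z m (n + 1)) (z (m + 1) (n + 1))"
    by (rule mH1_iff_dH2) (simp_all add: s_def t_def u_def v_def)
qed (rule three_d_compatible_dH2)

end
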